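(* Every finite distributive lattice $L$ with more than one element can be generated from the one-element lattice $\mathbf{1}$ by finitely many expansions $\boxplus$: there are lattices $L_0\cong\mathbf{1},L_1,\dots,L_m$ with $L_m\cong L$ such that for each $i\ge1$, $L_i=L_{i-1}\boxplus K_i$ for some cutting $K_i$ of $L_{i-1}$.
   Context: For a finite poset $P$, $\mathcal{F}(P)$ is the set of filters (up-sets) of $P$ ordered by reverse inclusion; it is a finite distributive lattice with least element $P$ and greatest element $\emptyset$, and $\mathcal{F}(\emptyset)$ is the one-element lattice. Every finite distributive lattice is isomorphic to some $\mathcal{F}(P)$. A cutting of a finite distributive lattice $L$ is an interval $K=[\hat0_K,\hat1_K]$ of $L$ such that every maximal chain of $L$ meets $K$. For a cutting $K$ of $L=\mathcal{F}(P)$, let $S=\hat0_K\setminus\hat1_K$, $S_0$ the set of maximal elements of $P\setminus\hat0_K$, $S_1$ the set of minimal elements of $\hat1_K$. The poset $P_K$ is $P\cup\{x_K\}$ ($x_K$ new) where the order on $P$ is unchanged, $z<x_K$ iff $z\le s$ for some $s\in S_0$, $x_K<y$ iff $y\ge s$ for some $s\in S_1$, and $x_K$ is incomparable to every element of $S$. The convex expansion is $L\boxplus K:=\mathcal{F}(P_K)$. *)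

theory Defs
  imports Main
begin

text \<open>A (finite) poset is represented by a carrier set together with an order
relation; only the values of the relation on the carrier matter.\<close>

definition partial_order_on' :: "'a set \<Rightarrow> ('a \<Rightarrow> 'a \<Rightarrow> bool) \<Rightarrow> bool" where
  "partial_order_on' A le \<longleftrightarrow>
     (\<forall>x\<in>A. le x x) \<and>
     (\<forall>x\<in>A. \<forall>y\<in>A. le x y \<and> le y x \<longrightarrow> x = y) \<and>
     (\<forall>x\<in>A. \<forall>y\<in>A. \<forall>z\<in>A. le x y \<and> le y z \<longrightarrow> le x z)"

definition is_lub :: "'a set \<Rightarrow> ('a \<Rightarrow> 'a \<Rightarrow> bool) \<Rightarrow> 'a \<Rightarrow> 'a \<Rightarrow> 'a \<Rightarrow> bool" where
  "is_lub A le x y s \<longleftrightarrow> s \<in> A \<and> le x s \<and> le y s \<and>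
     (\<forall>u\<in>A. le x u \<and> le y u \<longrightarrow> le s u)"

definition is_glb :: "'a set \<Rightarrow> ('a \<Rightarrow> 'a \<Rightarrow> bool) \<Rightarrow> 'a \<Rightarrow> 'a \<Rightarrow> 'a \<Rightarrow> bool" where
  "is_glb A le x y s \<longleftrightarrow> s \<in> A \<and> le s x \<and> le s y \<and>
     (\<forall>u\<in>A. le u x \<and> le u y \<longrightarrow> le u s)"

definition join_on :: "'a set \<Rightarrow> ('a \<Rightarrow> 'a \<Rightarrow> bool) \<Rightarrow> 'a \<Rightarrow> 'a \<Rightarrow> 'a" where
  "join_on A le x y = (THE s. is_lub A le x y s)"

definition meet_on :: "'a set \<Rightarrow> ('a \<Rightarrow> 'a \<Rightarrow> bool) \<Rightarrow> 'a \<Rightarrow> 'a \<Rightarrow> 'a" where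
  "meet_on A le x y = (THE s. is_glb A le x y s)"

definition lattice_on :: "'a set \<Rightarrow> ('a \<Rightarrow> 'a \<Rightarrow> bool) \<Rightarrow> bool" where
  "lattice_on A le \<longleftrightarrow> partial_order_on' A le \<and> A \<noteq> {} \<and>
     (\<forall>x\<in>A. \<forall>y\<in>A. (\<exists>s. is_lub A le x y s) \<and> (\<exists>s. is_glb A le x y s))"

definition finite_distrib_lattice_on :: "'a set \<Rightarrow> ('a \<Rightarrow> 'a \<Rightarrow> bool) \<Rightarrow> bool" where
  "finite_distrib_lattice_on A le \<longleftrightarrow> finite A \<and> lattice_on A le \<and>
     (\<forall>x\<in>A. \<forall>y\<in>A. \<forall>z\<in>A.
        meet_on A le x (join_on A le y z) = join_on A le (meet_on A le x y) (meet_on A le x z))"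

definition order_iso :: "'a set \<Rightarrow> ('a \<Rightarrow> 'a \<Rightarrow> bool) \<Rightarrow> 'b set \<Rightarrow> ('b \<Rightarrow> 'b \<Rightarrow> bool) \<Rightarrow> bool" where
  "order_iso A le B le' \<longleftrightarrow>
     (\<exists>f. bij_betw f A B \<and> (\<forall>x\<in>A. \<forall>y\<in>A. le x y \<longleftrightarrow> le' (f x) (f y)))"

definition filters :: "'a set \<Rightarrow> ('a \<Rightarrow> 'a \<Rightarrow> bool) \<Rightarrow> 'a set set" where
  "filters P le = {U. U \<subseteq> P \<and> (\<forall>x\<in>U. \<forall>y\<in>P. le x y \<longrightarrow> y \<in> U)}"

definition rev_incl :: "'a set \<Rightarrow> 'a set \<Rightarrow> bool" where
  "rev_incl U V \<longleftrightarrow> V \<subseteq> U"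

definition is_chain_on :: "'a set \<Rightarrow> ('a \<Rightarrow> 'a \<Rightarrow> bool) \<Rightarrow> 'a set \<Rightarrow> bool" where
  "is_chain_on A le C \<longleftrightarrow> C \<subseteq> A \<and> (\<forall>x\<in>C. \<forall>y\<in>C. le x y \<or> le y x)"

definition maximal_chain_on :: "'a set \<Rightarrow> ('a \<Rightarrow> 'a \<Rightarrow> bool) \<Rightarrow> 'a set \<Rightarrow> bool" where
  "maximal_chain_on A le C \<longleftrightarrow> is_chain_on A le C \<and>
     (\<forall>C'. is_chain_on A le C' \<and> C \<subseteq> C' \<longrightarrow> C' = C)"

definition interval_on :: "'a set \<Rightarrow> ('a \<Rightarrow> 'a \<Rightarrow> bool) \<Rightarrow> 'a \<Rightarrow> 'a \<Rightarrow> 'a set" where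
  "interval_on A le a b = {x\<in>A. le a x \<and> le x b}"

definition cutting_on :: "'a set \<Rightarrow> ('a \<Rightarrow> 'a \<Rightarrow> bool) \<Rightarrow> 'a \<Rightarrow> 'a \<Rightarrow> bool" where
  "cutting_on A le a b \<longleftrightarrow> a \<in> A \<and> b \<in> A \<and> le a b \<and>
     (\<forall>C. maximal_chain_on A le C \<longrightarrow> C \<inter> interval_on A le a b \<noteq> {})"

text \<open>The poset P_K for a cutting K = [U0, U1] of F(P) (U0 = bottom of K,
U1 = top of K), with new element xK.  S0 = maximal elements of P - U0,
S1 = minimal elements of U1.\<close>

definition maximal_elems :: "'a set \<Rightarrow> ('a \<Rightarrow> 'a \<Rightarrow> bool) \<Rightarrow> 'a set" where
  "maximal_elems X le = {s\<in>X. \<forall>y\<in>X. le s y \<longrightarrow> y = s}"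

definition minimal_elems :: "'a set \<Rightarrow> ('a \<Rightarrow> 'a \<Rightarrow> bool) \<Rightarrow> 'a set" where
  "minimal_elems X le = {s\<in>X. \<forall>y\<in>X. le y s \<longrightarrow> y = s}"

definition expansion_order ::
  "'a set \<Rightarrow> ('a \<Rightarrow> 'a \<Rightarrow> bool) \<Rightarrow> 'a set \<Rightarrow> 'a set \<Rightarrow> 'a \<Rightarrow> ('a \<Rightarrow> 'a \<Rightarrow> bool)" where
  "expansion_order P le U0 U1 xK = (\<lambda>z w.
      (z \<in> P \<and> w \<in> P \<and> le z w) \<or>
      (z = xK \<and> w = xK) \<or>
      (z \<in> P \<and> w = xK \<and> (\<exists>s\<in>maximal_elems (P - U0) le. le z s)) \<or>
      (z = xK \<and> w \<in> P \<and> (\<exists>s\<in>minimal_elems U1 le. le s w)))"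

text \<open>(P', le') is (up to the irrelevant values of le' outside P') the poset
P_K for the cutting [U0, U1] of F(P), with new element xK.  Note that in F(P)
the order is reverse inclusion, so U1 \<subseteq> U0.  The incomparability of xK with
S = U0 - U1 is a consequence of the two defining clauses.\<close>
definition is_expansion_poset ::
  "'a set \<Rightarrow> ('a \<Rightarrow> 'a \<Rightarrow> bool) \<Rightarrow> 'a set \<Rightarrow> 'a set \<Rightarrow> 'a \<Rightarrow> 'a set \<Rightarrow> ('a \<Rightarrow> 'a \<Rightarrow> bool) \<Rightarrow> bool" where
  "is_expansion_poset P le U0 U1 xK P' le' \<longleftrightarrow>
     xK \<notin> P \<and> P' = insert xK P \<and>
     (\<forall>z\<in>P'. \<forall>w\<in>P'. le' z w \<longleftrightarrow> expansion_order P le U0 U1 xK z w)"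

end

theory Submission
  imports Defs
begin

text \<open>By Birkhoff's representation theorem a finite distributive lattice A is isomorphic
to the lattice F(J) of filters of its poset J of join-prime elements. Number J as
0, ..., n - 1 along a linear extension. Then {0, ..., i} arises from {0, ..., i - 1} by
adjoining i as a maximal element, and adjoining a maximal element x to a poset P is the
convex expansion of F(P) at the interval from the filter of elements not below x up to
the top \<emptyset> of F(P); this interval is a cutting because the top lies on every maximal
chain. So n expansions lead from F(\<emptyset>) = 1 to F(J), which is isomorphic to A.\<close>

section \<open>Finite posets\<close>

lemma partial_order_on'D:
  assumes "partial_order_on' A le"
  shows partial_order_on'_refl: "x \<in> A \<Longrightarrow> le x x"
    and partial_order_on'_antisym: "x \<in> A \<Longrightarrow> y \<in> A \<Longrightarrow> le x y \<Longrightarrow> le y x \<Longrightarrow> x = y"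
    and partial_order_on'_trans:
      "x \<in> A \<Longrightarrow> y \<in> A \<Longrightarrow> z \<in> A \<Longrightarrow> le x y \<Longrightarrow> le y z \<Longrightarrow> le x z"
  using assms unfolding partial_order_on'_def by blast+

lemma partial_order_on'_subset:
  "partial_order_on' A le \<Longrightarrow> B \<subseteq> A \<Longrightarrow> partial_order_on' B le"
  unfolding partial_order_on'_def by blast

lemma partial_order_on'_converse:
  "partial_order_on' A le \<Longrightarrow> partial_order_on' A (\<lambda>x y. le y x)"
  unfolding partial_order_on'_def by blast

lemma partial_order_on'_inv_image:
  assumes "partial_order_on' A le" "inj_on g N" "g ` N \<subseteq> A"
  shows "partial_order_on' N (\<lambda>a b. le (g a) (g b))"
  using assms unfolding partial_order_on'_def inj_on_def image_subset_iff by blast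

lemma maximal_elems_eq_minimal_elems_converse:
  "maximal_elems X le = minimal_elems X (\<lambda>x y. le y x)"
  unfolding maximal_elems_def minimal_elems_def ..

lemma finite_partial_order_minimal_elems_nonempty:
  assumes "finite X" "X \<noteq> {}" "partial_order_on' X le"
  shows "minimal_elems X le \<noteq> {}"
  using assms
proof (induction X rule: finite_ne_induct)
  case (singleton x)
  then show ?case by (simp add: minimal_elems_def)
next
  case (insert x F)
  have "partial_order_on' F le" by (rule partial_order_on'_subset[OF insert.prems]) blast
  then obtain m where m: "m \<in> minimal_elems F le" using insert.IH by blast
  show ?case
  proof (cases "le x m")
    case True
    have m_min: "m \<in> F" "\<And>z. z \<in> F \<Longrightarrow> le z m \<Longrightarrow> z = m"
      using m unfolding minimal_elems_def by auto
    have "y = x" if y: "y \<in> insert x F" and yx: "le y x" for y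
    proof (rule ccontr)
      assume "y \<noteq> x"
      with y have "y \<in> F" by blast
      then have "le y m"
        using partial_order_on'_trans[OF insert.prems _ _ _ yx True] m_min(1) by blast
      then have "y = m" using m_min \<open>y \<in> F\<close> by blast
      then have "x = m"
        using partial_order_on'_antisym[OF insert.prems] True yx m_min(1) by blast
      then show False using insert.hyps m_min(1) by blast
    qed
    then have "x \<in> minimal_elems (insert x F) le" unfolding minimal_elems_def by blast
    then show ?thesis by blast
  next
    case False
    then have "m \<in> minimal_elems (insert x F) le"
      using m unfolding minimal_elems_def by blast
    then show ?thesis by blast
  qed
qed

lemma finite_partial_order_minimal_below:
  assumes "finite X" "partial_order_on' X le" "a \<in> X"
  shows "\<exists>m\<in>minimal_elems X le. le m a"
proof -
  let ?Y = "{y\<in>X. le y a}"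
  have "finite ?Y" using assms(1) by simp
  moreover have "?Y \<noteq> {}" using assms(3) partial_order_on'_refl[OF assms(2,3)] by blast
  moreover have "partial_order_on' ?Y le" by (rule partial_order_on'_subset[OF assms(2)]) blast
  ultimately obtain m where m: "m \<in> minimal_elems ?Y le"
    using finite_partial_order_minimal_elems_nonempty by blast
  then have mX: "m \<in> X" and ma: "le m a" unfolding minimal_elems_def by auto
  have "y = m" if "y \<in> X" "le y m" for y
  proof -
    have "le y a" using partial_order_on'_trans[OF assms(2) that(1) mX assms(3) that(2) ma] .
    then show "y = m" using m that unfolding minimal_elems_def by blast
  qed
  then have "m \<in> minimal_elems X le" unfolding minimal_elems_def using mX by blast
  then show ?thesis using ma by blast
qed

lemma finite_partial_order_maximal_above:
  assumes "finite X" "partial_order_on' X le" "a \<in> X"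
  shows "\<exists>m\<in>maximal_elems X le. le a m"
  using finite_partial_order_minimal_below[OF assms(1) partial_order_on'_converse[OF assms(2)] assms(3)]
  unfolding maximal_elems_eq_minimal_elems_converse .

section \<open>Order isomorphisms and lattices of filters\<close>

lemma order_iso_sym:
  assumes "order_iso A le B le'"
  shows "order_iso B le' A le"
proof -
  obtain f where f: "bij_betw f A B" and ord: "\<forall>x\<in>A. \<forall>y\<in>A. le x y \<longleftrightarrow> le' (f x) (f y)"
    using assms unfolding order_iso_def by blast
  have "bij_betw (inv_into A f) B A" using f by (rule bij_betw_inv_into)
  moreover have "le' x y \<longleftrightarrow> le (inv_into A f x) (inv_into A f y)" if "x \<in> B" "y \<in> B" for x y
    using ord that f bij_betw_inv_into_right[OF f] bij_betwE[OF bij_betw_inv_into[OF f]] by metis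
  ultimately show ?thesis unfolding order_iso_def by blast
qed

lemma order_iso_trans:
  assumes "order_iso A r B s" "order_iso B s C t"
  shows "order_iso A r C t"
proof -
  obtain f where f: "bij_betw f A B" "\<forall>x\<in>A. \<forall>y\<in>A. r x y \<longleftrightarrow> s (f x) (f y)"
    using assms(1) unfolding order_iso_def by blast
  obtain g where g: "bij_betw g B C" "\<forall>x\<in>B. \<forall>y\<in>B. s x y \<longleftrightarrow> t (g x) (g y)"
    using assms(2) unfolding order_iso_def by blast
  have "bij_betw (g \<circ> f) A C" using f(1) g(1) by (rule bij_betw_trans)
  moreover have "\<forall>x\<in>A. \<forall>y\<in>A. r x y \<longleftrightarrow> t ((g \<circ> f) x) ((g \<circ> f) y)"
    using f g bij_betwE[OF f(1)] by simp
  ultimately show ?thesis unfolding order_iso_def by blast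
qed

lemma image_mem_filters:
  assumes f: "bij_betw f N J" "\<forall>a\<in>N. \<forall>b\<in>N. R a b \<longleftrightarrow> le (f a) (f b)"
    and V: "V \<in> filters N R"
  shows "f ` V \<in> filters J le"
proof -
  have VN: "V \<subseteq> N" and up: "\<And>v w. v \<in> V \<Longrightarrow> w \<in> N \<Longrightarrow> R v w \<Longrightarrow> w \<in> V"
    using V unfolding filters_def by blast+
  have "f ` V \<subseteq> J" using VN bij_betw_imp_surj_on[OF f(1)] by blast
  moreover have "y \<in> f ` V" if x: "x \<in> f ` V" and y: "y \<in> J" and xy: "le x y" for x y
  proof -
    obtain v w where "v \<in> V" "x = f v" "w \<in> N" "y = f w"
      using x y bij_betw_imp_surj_on[OF f(1)] by blast
    then show ?thesis using up f(2) VN xy by blast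
  qed
  ultimately show ?thesis unfolding filters_def by blast
qed

lemma vimage_mem_filters:
  assumes f: "f ` N \<subseteq> J" "\<forall>a\<in>N. \<forall>b\<in>N. R a b \<longleftrightarrow> le (f a) (f b)"
    and U: "U \<in> filters J le"
  shows "N \<inter> f -` U \<in> filters N R"
proof -
  have "f w \<in> U" if "v \<in> N" "f v \<in> U" "w \<in> N" "R v w" for v w
    using U f that unfolding filters_def by blast
  then show ?thesis unfolding filters_def by blast
qed

lemma order_iso_filters:
  assumes "order_iso N R J le"
  shows "order_iso (filters N R) rev_incl (filters J le) rev_incl"
proof -
  obtain f where f: "bij_betw f N J" "\<forall>a\<in>N. \<forall>b\<in>N. R a b \<longleftrightarrow> le (f a) (f b)"
    using assms unfolding order_iso_def by blast
  have fN: "f ` N = J" using f(1) by (rule bij_betw_imp_surj_on)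
  have "image f ` filters N R = filters J le"
  proof
    show "image f ` filters N R \<subseteq> filters J le" using image_mem_filters[OF f] by blast
  next
    show "filters J le \<subseteq> image f ` filters N R"
    proof
      fix U assume U: "U \<in> filters J le"
      have "U \<subseteq> f ` N" using U fN unfolding filters_def by blast
      then have "U = f ` (N \<inter> f -` U)" by blast
      moreover have "N \<inter> f -` U \<in> filters N R"
        using vimage_mem_filters[OF _ f(2) U] fN by blast
      ultimately show "U \<in> image f ` filters N R" by (rule image_eqI)
    qed
  qed
  then have "bij_betw (image f) (filters N R) (filters J le)"
    by (intro bij_betw_subset[OF bij_betw_image_Pow[OF f(1)]]) (auto simp: filters_def)
  moreover have "rev_incl V W \<longleftrightarrow> rev_incl (f ` V) (f ` W)"
    if "V \<in> filters N R" "W \<in> filters N R" for V W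
  proof -
    have V: "V \<subseteq> N" and W: "W \<subseteq> N" using that unfolding filters_def by blast+
    have "W \<subseteq> V" if "f ` W \<subseteq> f ` V"
      using that W inj_on_image_mem_iff[OF bij_betw_imp_inj_on[OF f(1)] _ V] by blast
    then show ?thesis unfolding rev_incl_def by blast
  qed
  ultimately show ?thesis unfolding order_iso_def by blast
qed

section \<open>Birkhoff's representation theorem\<close>

lemma lattice_on_partial_order: "lattice_on A le \<Longrightarrow> partial_order_on' A le"
  unfolding lattice_on_def by blast

lemma is_lub_unique: "partial_order_on' A le \<Longrightarrow> is_lub A le x y s \<Longrightarrow> is_lub A le x y t \<Longrightarrow> s = t"
  unfolding partial_order_on'_def is_lub_def by blast

lemma is_glb_unique: "partial_order_on' A le \<Longrightarrow> is_glb A le x y s \<Longrightarrow> is_glb A le x y t \<Longrightarrow> s = t"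
  unfolding partial_order_on'_def is_glb_def by blast

lemma join_on_is_lub:
  assumes "lattice_on A le" "x \<in> A" "y \<in> A"
  shows "is_lub A le x y (join_on A le x y)"
proof -
  obtain s where "is_lub A le x y s" using assms unfolding lattice_on_def by blast
  then have "\<exists>!s. is_lub A le x y s" using is_lub_unique[OF lattice_on_partial_order[OF assms(1)]] by blast
  then show ?thesis unfolding join_on_def by (rule theI')
qed

lemma meet_on_is_glb:
  assumes "lattice_on A le" "x \<in> A" "y \<in> A"
  shows "is_glb A le x y (meet_on A le x y)"
proof -
  obtain s where "is_glb A le x y s" using assms unfolding lattice_on_def by blast
  then have "\<exists>!s. is_glb A le x y s" using is_glb_unique[OF lattice_on_partial_order[OF assms(1)]] by blast
  then show ?thesis unfolding meet_on_def by (rule theI')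
qed

lemma join_onD:
  assumes "lattice_on A le" "x \<in> A" "y \<in> A"
  shows join_on_closed: "join_on A le x y \<in> A"
    and join_on_upper1: "le x (join_on A le x y)"
    and join_on_upper2: "le y (join_on A le x y)"
    and join_on_least: "u \<in> A \<Longrightarrow> le x u \<Longrightarrow> le y u \<Longrightarrow> le (join_on A le x y) u"
  using join_on_is_lub[OF assms] unfolding is_lub_def by blast+

lemma meet_onD:
  assumes "lattice_on A le" "x \<in> A" "y \<in> A"
  shows meet_on_closed: "meet_on A le x y \<in> A"
    and meet_on_lower1: "le (meet_on A le x y) x"
    and meet_on_lower2: "le (meet_on A le x y) y"
    and meet_on_greatest: "u \<in> A \<Longrightarrow> le u x \<Longrightarrow> le u y \<Longrightarrow> le u (meet_on A le x y)"
  using meet_on_is_glb[OF assms] unfolding is_glb_def by blast+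

lemma meet_on_eq_left:
  assumes "lattice_on A le" "x \<in> A" "y \<in> A" "le x y"
  shows "meet_on A le x y = x"
  using partial_order_on'_antisym[OF lattice_on_partial_order[OF assms(1)]] meet_onD[OF assms(1-3)]
    partial_order_on'_refl[OF lattice_on_partial_order[OF assms(1)]] assms(2,4) by blast

lemma finite_lattice_has_least:
  assumes "finite A" "lattice_on A le"
  shows "\<exists>z\<in>A. \<forall>x\<in>A. le z x"
proof -
  have po: "partial_order_on' A le" using assms(2) by (rule lattice_on_partial_order)
  moreover have "A \<noteq> {}" using assms(2) unfolding lattice_on_def by blast
  ultimately obtain m where m: "m \<in> minimal_elems A le"
    using finite_partial_order_minimal_elems_nonempty[OF assms(1)] by blast
  then have mA: "m \<in> A" unfolding minimal_elems_def by blast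
  have "le m x" if x: "x \<in> A" for x
  proof -
    have "meet_on A le m x = m"
      using m meet_onD[OF assms(2) mA x] unfolding minimal_elems_def by blast
    then show ?thesis using meet_on_lower2[OF assms(2) mA x] by simp
  qed
  then show ?thesis using mA by blast
qed

text \<open>In a distributive lattice the join-prime elements are exactly the join-irreducible ones.\<close>

definition join_primes :: "'a set \<Rightarrow> ('a \<Rightarrow> 'a \<Rightarrow> bool) \<Rightarrow> 'a set" where
  "join_primes A le = {j\<in>A. (\<exists>x\<in>A. \<not> le j x) \<and>
      (\<forall>x\<in>A. \<forall>y\<in>A. le j (join_on A le x y) \<longrightarrow> le j x \<or> le j y)}"

lemma join_primes_subset: "join_primes A le \<subseteq> A"
  unfolding join_primes_def by blast

lemma distrib_le_join_on_imp_eq: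
  assumes "finite_distrib_lattice_on A le" "j \<in> A" "x \<in> A" "y \<in> A"
    and "le j (join_on A le x y)"
  shows "j = join_on A le (meet_on A le j x) (meet_on A le j y)"
proof -
  have L: "lattice_on A le" using assms(1) unfolding finite_distrib_lattice_on_def by blast
  have "j = meet_on A le j (join_on A le x y)"
    using meet_on_eq_left[OF L assms(2) join_on_closed[OF L assms(3,4)] assms(5)] by simp
  also have "\<dots> = join_on A le (meet_on A le j x) (meet_on A le j y)"
    using assms(1-4) unfolding finite_distrib_lattice_on_def by blast
  finally show ?thesis .
qed

lemma join_primes_separate:
  assumes fdl: "finite_distrib_lattice_on A le" and a: "a \<in> A" and b: "b \<in> A" and "\<not> le a b"
  shows "\<exists>j\<in>join_primes A le. le j a \<and> \<not> le j b"
proof -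
  have L: "lattice_on A le" and fin: "finite A"
    using fdl unfolding finite_distrib_lattice_on_def by blast+
  note po = lattice_on_partial_order[OF L]
  let ?X = "{x\<in>A. le x a \<and> \<not> le x b}"
  have "finite ?X" using fin by simp
  moreover have "?X \<noteq> {}" using a assms(4) partial_order_on'_refl[OF po a] by blast
  moreover have "partial_order_on' ?X le" by (rule partial_order_on'_subset[OF po]) blast
  ultimately have "minimal_elems ?X le \<noteq> {}" by (rule finite_partial_order_minimal_elems_nonempty)
  then obtain j where j: "j \<in> ?X" and j_min: "\<And>z. z \<in> ?X \<Longrightarrow> le z j \<Longrightarrow> z = j"
    unfolding minimal_elems_def by blast
  have jA: "j \<in> A" and ja: "le j a" and jb: "\<not> le j b" using j by blast+
  have below_b: "le z b" if "z \<in> A" "le z j" "z \<noteq> j" for z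
  proof -
    have "le z a" using partial_order_on'_trans[OF po that(1) jA a that(2) ja] .
    then show ?thesis using j_min[of z] that by blast
  qed
  have "le j x \<or> le j y" if x: "x \<in> A" and y: "y \<in> A" and j_le: "le j (join_on A le x y)" for x y
  proof (rule ccontr)
    assume "\<not> (le j x \<or> le j y)"
    then have "le (meet_on A le j x) b" "le (meet_on A le j y) b"
      using below_b meet_onD[OF L jA x] meet_onD[OF L jA y] by metis+
    then have "le (join_on A le (meet_on A le j x) (meet_on A le j y)) b"
      using join_on_least[OF L meet_on_closed[OF L jA x] meet_on_closed[OF L jA y] b] by blast
    then show False using distrib_le_join_on_imp_eq[OF fdl jA x y j_le] jb by simp
  qed
  then have "j \<in> join_primes A le" unfolding join_primes_def using jA b jb by blast
  then show ?thesis using ja jb by blast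
qed

lemma join_prime_down_sets_realised:
  assumes "finite A" "lattice_on A le" "finite D" "D \<subseteq> join_primes A le"
  shows "\<exists>a\<in>A. \<forall>j\<in>join_primes A le. le j a \<longleftrightarrow> (\<exists>d\<in>D. le j d)"
  using assms(3,4)
proof (induction D rule: finite_induct)
  case empty
  obtain z where z: "z \<in> A" "\<forall>x\<in>A. le z x" using finite_lattice_has_least[OF assms(1,2)] by blast
  have "\<not> le j z" if "j \<in> join_primes A le" for j
    using that z partial_order_on'_trans[OF lattice_on_partial_order[OF assms(2)]]
    unfolding join_primes_def by blast
  then show ?case using z(1) by blast
next
  case (insert d D)
  then obtain a where a: "a \<in> A" "\<forall>j\<in>join_primes A le. le j a \<longleftrightarrow> (\<exists>d\<in>D. le j d)"
    by blast
  have dA: "d \<in> A" using insert.prems unfolding join_primes_def by blast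
  note po = lattice_on_partial_order[OF assms(2)]
  let ?s = "join_on A le a d"
  have "le j ?s \<longleftrightarrow> le j a \<or> le j d" if j: "j \<in> join_primes A le" for j
  proof
    show "le j ?s \<Longrightarrow> le j a \<or> le j d" using j a(1) dA unfolding join_primes_def by blast
  next
    have "j \<in> A" using j unfolding join_primes_def by blast
    then show "le j a \<or> le j d \<Longrightarrow> le j ?s"
      using partial_order_on'_trans[OF po] join_onD[OF assms(2) a(1) dA] a(1) dA by blast
  qed
  then show ?case using a join_on_closed[OF assms(2) a(1) dA] by auto
qed

theorem birkhoff_representation:
  assumes fdl: "finite_distrib_lattice_on A le"
  shows "order_iso A le (filters (join_primes A le) le) rev_incl"
proof -
  have fin: "finite A" and L: "lattice_on A le" using fdl unfolding finite_distrib_lattice_on_def by blast+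
  note po = lattice_on_partial_order[OF L]
  let ?J = "join_primes A le"
  have JA: "?J \<subseteq> A" by (rule join_primes_subset)
  define \<phi> where "\<phi> a = {j\<in>?J. \<not> le j a}" for a
  have \<phi>_le_iff: "rev_incl (\<phi> a) (\<phi> b) \<longleftrightarrow> le a b" if a: "a \<in> A" and b: "b \<in> A" for a b
  proof
    assume "rev_incl (\<phi> a) (\<phi> b)"
    then show "le a b"
      using join_primes_separate[OF fdl a b] unfolding rev_incl_def \<phi>_def by blast
  next
    assume ab: "le a b"
    have "\<not> le j a" if "j \<in> ?J" "\<not> le j b" for j
      using that partial_order_on'_trans[OF po _ a b _ ab] JA by blast
    then show "rev_incl (\<phi> a) (\<phi> b)" unfolding rev_incl_def \<phi>_def by blast
  qed
  have "inj_on \<phi> A"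
  proof (rule inj_onI)
    fix a b assume a: "a \<in> A" and b: "b \<in> A" and "\<phi> a = \<phi> b"
    then have "le a b" "le b a" using \<phi>_le_iff[OF a b] \<phi>_le_iff[OF b a] by (simp_all add: rev_incl_def)
    then show "a = b" using partial_order_on'_antisym[OF po a b] by blast
  qed
  moreover have "\<phi> ` A = filters ?J le"
  proof
    have "\<phi> a \<in> filters ?J le" if a: "a \<in> A" for a
    proof -
      have "\<not> le y a" if "x \<in> \<phi> a" "y \<in> ?J" "le x y" for x y
        using that partial_order_on'_trans[OF po _ _ a] JA unfolding \<phi>_def by blast
      then show ?thesis unfolding filters_def \<phi>_def by blast
    qed
    then show "\<phi> ` A \<subseteq> filters ?J le" by blast
  next
    show "filters ?J le \<subseteq> \<phi> ` A"
    proof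
      fix U assume U: "U \<in> filters ?J le"
      have "finite (?J - U)" using fin JA finite_subset by blast
      then obtain a where a: "a \<in> A" "\<forall>j\<in>?J. le j a \<longleftrightarrow> (\<exists>d\<in>?J - U. le j d)"
        using join_prime_down_sets_realised[OF fin L] by blast
      have "le j a \<longleftrightarrow> j \<notin> U" if j: "j \<in> ?J" for j
      proof -
        have "(\<exists>d\<in>?J - U. le j d) \<longleftrightarrow> j \<notin> U"
          using U j partial_order_on'_refl[OF po] JA unfolding filters_def by blast
        then show ?thesis using a(2) j by blast
      qed
      moreover have "U \<subseteq> ?J" using U unfolding filters_def by blast
      ultimately have "\<phi> a = U" unfolding \<phi>_def by blast
      then show "U \<in> \<phi> ` A" using a(1) by blast
    qed
  qed
  ultimately have "bij_betw \<phi> A (filters ?J le)" unfolding bij_betw_def ..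
  then show ?thesis unfolding order_iso_def using \<phi>_le_iff by blast
qed

section \<open>Linear extensions\<close>

lemma finite_partial_order_linear_extension:
  assumes "finite Q" "partial_order_on' Q le"
  shows "\<exists>g. bij_betw g {..<card Q} Q \<and> (\<forall>a<card Q. \<forall>b<card Q. le (g a) (g b) \<longrightarrow> a \<le> b)"
  using assms
proof (induction "card Q" arbitrary: Q)
  case 0
  then show ?case by (simp add: bij_betw_def)
next
  case (Suc n)
  then have "Q \<noteq> {}" by auto
  then obtain a where "a \<in> Q" by blast
  then obtain q where q: "q \<in> maximal_elems Q le"
    using finite_partial_order_maximal_above[OF Suc.prems] by blast
  then have qQ: "q \<in> Q" and q_max: "\<And>y. y \<in> Q \<Longrightarrow> le q y \<Longrightarrow> y = q"
    unfolding maximal_elems_def by blast+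
  have "card (Q - {q}) = n" using Suc.hyps(2) qQ Suc.prems(1) by simp
  moreover have "partial_order_on' (Q - {q}) le" using Suc.prems(2) partial_order_on'_subset by blast
  ultimately obtain g' where g': "bij_betw g' {..<n} (Q - {q})"
    and g'_mono: "\<forall>a<n. \<forall>b<n. le (g' a) (g' b) \<longrightarrow> a \<le> b"
    using Suc.hyps(1) Suc.prems(1) by (metis finite_Diff)
  define g where "g = g'(n := q)"
  have "bij_betw g {..<n} (Q - {q})" using g' by (rule bij_betw_cong[THEN iffD1, rotated]) (simp add: g_def)
  then have "bij_betw g ({..<n} \<union> {n}) ((Q - {q}) \<union> {g n})"
    using notIn_Un_bij_betw3[of n "{..<n}" g "Q - {q}"] by (simp add: g_def)
  moreover have "{..<n} \<union> {n} = {..<Suc n}" "(Q - {q}) \<union> {g n} = Q" using qQ by (auto simp: g_def)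
  ultimately have "bij_betw g {..<Suc n} Q" by simp
  moreover have "a \<le> b" if "a < Suc n" "b < Suc n" "le (g a) (g b)" for a b
  proof (cases "b = n")
    case False
    then have b: "b < n" using that(2) by simp
    then have gb: "g b = g' b" "g' b \<in> Q - {q}" using bij_betwE[OF g'] by (simp_all add: g_def)
    show ?thesis
    proof (cases "a = n")
      case True
      then have "le q (g' b)" using that(3) gb(1) by (simp add: g_def)
      then show ?thesis using q_max gb(2) by blast
    next
      case False
      then show ?thesis using that g'_mono b gb by (simp add: g_def)
    qed
  qed (use that in simp)
  ultimately show ?case unfolding Suc.hyps(2)[symmetric] by blast
qed

lemma finite_partial_order_natural_labelling:
  assumes "finite Q" "partial_order_on' Q le"
  obtains R where "partial_order_on' {..<card Q} R" "order_iso {..<card Q} R Q le"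
    and "\<And>a b. a < card Q \<Longrightarrow> b < card Q \<Longrightarrow> R a b \<Longrightarrow> a \<le> b"
proof -
  obtain g where g: "bij_betw g {..<card Q} Q"
    and g_mono: "\<forall>a<card Q. \<forall>b<card Q. le (g a) (g b) \<longrightarrow> a \<le> b"
    using finite_partial_order_linear_extension[OF assms] by blast
  let ?R = "\<lambda>a b. le (g a) (g b)"
  have "partial_order_on' {..<card Q} ?R"
    using partial_order_on'_inv_image[OF assms(2) bij_betw_imp_inj_on[OF g]] bij_betw_imp_surj_on[OF g]
    by blast
  moreover have "order_iso {..<card Q} ?R Q le" unfolding order_iso_def using g by blast
  ultimately show ?thesis using that g_mono by blast
qed

section \<open>Adjoining a maximal element is a convex expansion\<close>

lemma cutting_on_top:
  assumes "a \<in> A" "t \<in> A" "\<forall>x\<in>A. le x t"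
  shows "cutting_on A le a t"
proof -
  have "t \<in> C" if "maximal_chain_on A le C" for C
  proof -
    have "is_chain_on A le (insert t C)"
      using that assms(2,3) unfolding maximal_chain_on_def is_chain_on_def by blast
    then show ?thesis using that unfolding maximal_chain_on_def by blast
  qed
  moreover have "t \<in> interval_on A le a t" using assms unfolding interval_on_def by blast
  ultimately show ?thesis unfolding cutting_on_def using assms by blast
qed

lemma cutting_on_filters_empty:
  "U \<in> filters P le \<Longrightarrow> cutting_on (filters P le) rev_incl U {}"
  by (rule cutting_on_top) (auto simp: filters_def rev_incl_def)

lemma not_below_mem_filters:
  assumes "partial_order_on' (insert x P) le"
  shows "P - {z. le z x} \<in> filters P le"
proof -
  have "\<not> le w x" if "z \<in> P" "\<not> le z x" "w \<in> P" "le z w" for z w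
    using that partial_order_on'_trans[OF assms, of z w x] by blast
  then show ?thesis unfolding filters_def by blast
qed

lemma is_expansion_poset_insert_maximal:
  assumes po: "partial_order_on' (insert x P) le" and "finite P" "x \<notin> P"
    and maximal: "\<forall>w\<in>P. \<not> le x w"
  shows "is_expansion_poset P le (P - {z. le z x}) {} x (insert x P) le"
proof -
  let ?X = "{z\<in>P. le z x}"
  have X: "P - (P - {z. le z x}) = ?X" by blast
  have X_fin: "finite ?X" using assms(2) by simp
  have X_po: "partial_order_on' ?X le" by (rule partial_order_on'_subset[OF po]) blast
  have below_x: "le z x \<longleftrightarrow> (\<exists>s\<in>maximal_elems ?X le. le z s)" if z: "z \<in> P" for z
  proof
    assume "le z x"
    with z have "z \<in> ?X" by blast
    then show "\<exists>s\<in>maximal_elems ?X le. le z s"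
      by (rule finite_partial_order_maximal_above[OF X_fin X_po])
  next
    assume "\<exists>s\<in>maximal_elems ?X le. le z s"
    then obtain s where "s \<in> P" "le s x" "le z s" unfolding maximal_elems_def by blast
    then show "le z x" using partial_order_on'_trans[OF po, of z s x] z by blast
  qed
  have "le z w \<longleftrightarrow> expansion_order P le (P - {z. le z x}) {} x z w"
    if z: "z \<in> insert x P" and w: "w \<in> insert x P" for z w
  proof (cases "z = x")
    case True
    then show ?thesis
      using w maximal partial_order_on'_refl[OF po] assms(3)
      unfolding expansion_order_def minimal_elems_def by auto
  next
    case False
    then have "z \<in> P" using z by blast
    then show ?thesis
      using False w below_x[of z] assms(3) unfolding expansion_order_def X by auto
  qed
  then show ?thesis unfolding is_expansion_poset_def using assms(3) by blast
qed

lemma natural_labelling_initial_segment_expansion: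
  assumes po: "partial_order_on' {..<n} R"
    and labelling: "\<And>a b. a < n \<Longrightarrow> b < n \<Longrightarrow> R a b \<Longrightarrow> a \<le> b"
    and "i < n"
  shows "partial_order_on' {..<i} R \<and> {..<i} - {z. R z i} \<in> filters {..<i} R \<and>
    {} \<in> filters {..<i} R \<and> cutting_on (filters {..<i} R) rev_incl ({..<i} - {z. R z i}) {} \<and>
    is_expansion_poset {..<i} R ({..<i} - {z. R z i}) {} i {..<Suc i} R"
proof -
  have po_i: "partial_order_on' (insert i {..<i}) R"
    by (rule partial_order_on'_subset[OF po]) (use \<open>i < n\<close> in auto)
  have U0: "{..<i} - {z. R z i} \<in> filters {..<i} R" by (rule not_below_mem_filters[OF po_i])
  have "\<not> R i w" if "w < i" for w using labelling[of i w] that \<open>i < n\<close> by fastforce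
  then have "is_expansion_poset {..<i} R ({..<i} - {z. R z i}) {} i {..<Suc i} R"
    using is_expansion_poset_insert_maximal[OF po_i] by (simp add: lessThan_Suc)
  moreover have "partial_order_on' {..<i} R" by (rule partial_order_on'_subset[OF po_i]) blast
  moreover have "{} \<in> filters {..<i} R" by (simp add: filters_def)
  ultimately show ?thesis using U0 cutting_on_filters_empty[OF U0] by blast
qed

theorem corollary2:
  fixes A :: "'a set" and le :: "'a \<Rightarrow> 'a \<Rightarrow> bool"
  assumes "finite_distrib_lattice_on A le"
    and "\<exists>x\<in>A. \<exists>y\<in>A. x \<noteq> y"
  shows "\<exists>(m::nat) (P :: nat \<Rightarrow> nat set) (ord :: nat \<Rightarrow> nat \<Rightarrow> nat \<Rightarrow> bool)
            (U0 :: nat \<Rightarrow> nat set) (U1 :: nat \<Rightarrow> nat set) (x :: nat \<Rightarrow> nat).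
           P 0 = {} \<and>
           (\<forall>i<m. finite (P i) \<and> partial_order_on' (P i) (ord i) \<and>
              U0 (Suc i) \<in> filters (P i) (ord i) \<and> U1 (Suc i) \<in> filters (P i) (ord i) \<and>
              cutting_on (filters (P i) (ord i)) rev_incl (U0 (Suc i)) (U1 (Suc i)) \<and>
              is_expansion_poset (P i) (ord i) (U0 (Suc i)) (U1 (Suc i)) (x (Suc i))
                                 (P (Suc i)) (ord (Suc i))) \<and>
           order_iso (filters (P m) (ord m)) rev_incl A le"
proof -
  let ?J = "join_primes A le"
  have "finite ?J" "partial_order_on' ?J le"
    using assms(1) finite_subset[OF join_primes_subset] partial_order_on'_subset[OF _ join_primes_subset]
    unfolding finite_distrib_lattice_on_def lattice_on_def by blast+
  then obtain R where R_po: "partial_order_on' {..<card ?J} R"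
    and R_iso: "order_iso {..<card ?J} R ?J le"
    and R_labelling: "\<And>a b. a < card ?J \<Longrightarrow> b < card ?J \<Longrightarrow> R a b \<Longrightarrow> a \<le> b"
    by (rule finite_partial_order_natural_labelling) blast
  have iso: "order_iso (filters {..<card ?J} R) rev_incl A le"
    by (rule order_iso_trans[OF order_iso_filters[OF R_iso]
          order_iso_sym[OF birkhoff_representation[OF assms(1)]]])
  \<comment> \<open>expansion number k + 1 adjoins the label k (the values at index 0 are never used)\<close>
  show ?thesis
    by (rule exI[of _ "card ?J"], rule exI[of _ "\<lambda>i. {..<i}"], rule exI[of _ "\<lambda>_. R"],
        rule exI[of _ "\<lambda>k. {..<k - 1} - {z. R z (k - 1)}"], rule exI[of _ "\<lambda>_. {}"],
        rule exI[of _ "\<lambda>k. k - 1"])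
      (use natural_labelling_initial_segment_expansion[OF R_po R_labelling] iso in simp)
qed

end
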